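(* Let $n\ge2$, let $a,b$ satisfy $0<a\le1$, $0<b\le\frac12$, $2a\ge1+b$, and let $0<c_0\le1$. If $F$ is an $(a,b)$-set of divergence, then $$\dim_H\big(F\cap[0,c_0]^n\big)\le \alpha:=\frac12+(n-1)a+b.$$
   Context: For $k\ge k_0$ let $R_k=2^k$, $D_k=R_k^{(n-(n-1)a+nb)/(n+1)}$, $Q_k=R_k^{\frac{n-1}{n+1}(2a-b-1)}$. A point $(p_1/q,\dots,p_n/q)$, $p_j,q\in\mathbb{Z}$, is an admissible fraction if $\gcd(p_1,q)=1$ and: $p_2,\dots,p_n$ arbitrary when $q$ is odd; all even when $q\equiv0\pmod4$; all odd when $q\equiv2\pmod4$. Fix $0<c\ll1$. Let $\mathcal{A}_k$ be the collection of axis-parallel boxes ("slabs") of dimensions $cR_k^{-1/2}\times cR_k^{-1}\times\cdots\times cR_k^{-1}$ (long side in the $x_1$ direction) centered at $\big(2p_1R_k/(qD_k^2),p_2/(D_kq),\dots,p_n/(D_kq)\big)$ with $(p_1/q,\dots,p_n/q)$ admissible and $1\le q\le Q_k$; $F_k=\bigcup_{s\in\mathcal{A}_k}s$. The $(a,b)$-set of divergence is $F=\limsup_{k\to\infty}F_k=\bigcap_N\bigcup_{k\ge N}F_k$. $\dim_H$ denotes Hausdorff dimension. *)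

theory Defs
  imports "HOL-Analysis.Analysis"
begin

definition hausdorff_content :: "real \<Rightarrow> real \<Rightarrow> 'a::metric_space set \<Rightarrow> ennreal" where
  "hausdorff_content \<delta> s E =
     (INF U \<in> {U :: nat \<Rightarrow> 'a set. (\<forall>i. bounded (U i) \<and> diameter (U i) \<le> \<delta>) \<and> E \<subseteq> (\<Union>i. U i)}.
        (\<Sum>i. ennreal (diameter (U i) powr s)))"

definition hausdorff_measure :: "real \<Rightarrow> 'a::metric_space set \<Rightarrow> ennreal" where
  "hausdorff_measure s E = (SUP \<delta> \<in> {0<..}. hausdorff_content \<delta> s E)"

definition hausdorff_dim :: "'a::metric_space set \<Rightarrow> ereal" where
  "hausdorff_dim E = Inf {ereal s | s. 0 \<le> s \<and> hausdorff_measure s E = 0}"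

definition Rk :: "nat \<Rightarrow> real" where "Rk k = 2 ^ k"

definition Dk :: "nat \<Rightarrow> real \<Rightarrow> real \<Rightarrow> nat \<Rightarrow> real" where
  "Dk n a b k = Rk k powr ((real n - (real n - 1) * a + real n * b) / (real n + 1))"

definition Qk :: "nat \<Rightarrow> real \<Rightarrow> real \<Rightarrow> nat \<Rightarrow> real" where
  "Qk n a b k = Rk k powr ((real n - 1) / (real n + 1) * (2 * a - b - 1))"

text \<open>Admissible fraction (p_1/q,...,p_n/q); j1 is the index playing the role of coordinate 1.\<close>
definition admissible :: "'n \<Rightarrow> ('n \<Rightarrow> int) \<Rightarrow> int \<Rightarrow> bool" where
  "admissible j1 p q \<longleftrightarrow> gcd (p j1) q = 1 \<and>
     (odd q \<or> (q mod 4 = 0 \<and> (\<forall>i. i \<noteq> j1 \<longrightarrow> even (p i)))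
            \<or> (q mod 4 = 2 \<and> (\<forall>i. i \<noteq> j1 \<longrightarrow> odd (p i))))"

definition slab :: "'n::finite \<Rightarrow> real \<Rightarrow> nat \<Rightarrow> real^'n \<Rightarrow> (real^'n) set" where
  "slab j1 c k z = {x. \<bar>x $ j1 - z $ j1\<bar> \<le> c * Rk k powr (-1/2) / 2 \<and>
                       (\<forall>i. i \<noteq> j1 \<longrightarrow> \<bar>x $ i - z $ i\<bar> \<le> c * Rk k powr (-1) / 2)}"

definition slab_center :: "'n::finite \<Rightarrow> real \<Rightarrow> real \<Rightarrow> nat \<Rightarrow> ('n \<Rightarrow> int) \<Rightarrow> int \<Rightarrow> real^'n" where
  "slab_center j1 a b k p q =
     (\<chi> i. if i = j1
           then 2 * real_of_int (p i) * Rk k / (real_of_int q * (Dk CARD('n) a b k)\<^sup>2)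
           else real_of_int (p i) / (Dk CARD('n) a b k * real_of_int q))"

definition Fk :: "'n::finite \<Rightarrow> real \<Rightarrow> real \<Rightarrow> real \<Rightarrow> nat \<Rightarrow> (real^'n) set" where
  "Fk j1 a b c k = (\<Union> {slab j1 c k (slab_center j1 a b k p q) | p q.
       admissible j1 p q \<and> 1 \<le> q \<and> real_of_int q \<le> Qk CARD('n) a b k})"

definition divergence_set :: "'n::finite \<Rightarrow> real \<Rightarrow> real \<Rightarrow> real \<Rightarrow> (real^'n) set" where
  "divergence_set j1 a b c = (\<Inter>N. \<Union>k\<in>{N..}. Fk j1 a b c k)"

end

theory Submission
  imports Defs
begin

(* Inside the unit
  cube, F_k is covered by slabs whose centres have q <= Q_k and numerators bounded by
  (1 + c) Q_k D_k^2 / (2 R_k) resp. (1 + c) D_k Q_k; cutting each slab along its long side into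
  about R_k^(1/2) cubes of side c R_k^(-1) covers F_k by O(R_k^alpha) sets of diameter
  O(R_k^(-1)), because Q_k D_k^2 = R_k^(1+b) and Q_k (D_k Q_k)^(n-1) = R_k^((n-1) a).
  For s > alpha the series sum_k R_k^(alpha - s) is geometric, and its tails bound the
  Hausdorff s-contents of the limsup set. *)

section \<open>Hausdorff measure of limsup sets\<close>

lemma hausdorff_content_le_suminf_finite_covers:
  fixes E :: "'a::metric_space set" and V :: "nat \<Rightarrow> 'a set set"
  assumes fin: "\<And>k. finite (V k)"
    and small: "\<And>k A. A \<in> V k \<Longrightarrow> bounded A \<and> diameter A \<le> \<delta>"
    and "0 \<le> \<delta>" and cov: "E \<subseteq> (\<Union>k. \<Union>(V k))"
  shows "hausdorff_content \<delta> s E \<le> (\<Sum>k. \<Sum>A\<in>V k. ennreal (diameter A powr s))"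
proof -
  obtain g where g: "\<And>k. bij_betw (g k) {..<card (V k)} (V k)"
    using ex_bij_betw_nat_finite[OF fin] by (metis atLeast0LessThan)
  define W where "W k j = (if j < card (V k) then g k j else {})" for k j
  define U where "U i = W (fst (prod_decode i)) (snd (prod_decode i))" for i
  have W_in: "W k j \<in> insert {} (V k)" for k j
    using bij_betwE[OF g] by (auto simp: W_def)
  have sum_W: "(\<Sum>j. ennreal (diameter (W k j) powr s)) = (\<Sum>A\<in>V k. ennreal (diameter A powr s))" for k
  proof -
    have "(\<Sum>j. ennreal (diameter (W k j) powr s)) = (\<Sum>j<card (V k). ennreal (diameter (g k j) powr s))"
      by (subst suminf_finite[of "{..<card (V k)}"]) (auto simp: W_def)
    also have "\<dots> = (\<Sum>A\<in>V k. ennreal (diameter A powr s))"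
      by (rule sum.reindex_bij_betw[OF g])
    finally show ?thesis .
  qed
  have "U \<in> {U. (\<forall>i. bounded (U i) \<and> diameter (U i) \<le> \<delta>) \<and> E \<subseteq> (\<Union>i. U i)}"
  proof safe
    fix i
    show "bounded (U i)" "diameter (U i) \<le> \<delta>"
      using W_in[of "fst (prod_decode i)" "snd (prod_decode i)"] small \<open>0 \<le> \<delta>\<close>
      unfolding U_def by auto
  next
    fix x assume "x \<in> E"
    then obtain k A where "A \<in> V k" "x \<in> A" using cov by auto
    then obtain j where "j < card (V k)" "g k j = A"
      using bij_betw_imp_surj_on[OF g] by (metis imageE lessThan_iff)
    then have "U (prod_encode (k, j)) = A" by (simp add: U_def W_def)
    then show "x \<in> (\<Union>i. U i)" using \<open>x \<in> A\<close> by blast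
  qed
  then have "hausdorff_content \<delta> s E \<le> (\<Sum>i. ennreal (diameter (U i) powr s))"
    unfolding hausdorff_content_def by (rule INF_lower)
  also have "\<dots> = (\<Sum>k. \<Sum>A\<in>V k. ennreal (diameter A powr s))"
    unfolding U_def by (rule suminf_ennreal_2dimen) (simp add: sum_W)
  finally show ?thesis .
qed

lemma sum_diameter_powr_le:
  fixes V :: "'a::metric_space set set"
  assumes "\<And>A. A \<in> V \<Longrightarrow> bounded A \<and> diameter A \<le> r" and "0 \<le> s"
  shows "(\<Sum>A\<in>V. ennreal (diameter A powr s)) \<le> ennreal (real (card V) * r powr s)"
proof -
  have "(\<Sum>A\<in>V. ennreal (diameter A powr s)) \<le> (\<Sum>A\<in>V. ennreal (r powr s))"
    using assms by (intro sum_mono ennreal_leI powr_mono2) (auto simp: diameter_ge_0)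
  also have "\<dots> = ennreal (real (card V) * r powr s)"
    by (simp add: ennreal_of_nat_eq_real_of_nat ennreal_mult)
  finally show ?thesis .
qed

lemma hausdorff_measure_limsup_finite_covers_eq_0:
  fixes E :: "'a::metric_space set" and V :: "nat \<Rightarrow> 'a set set" and r :: "nat \<Rightarrow> real"
  assumes fin: "\<And>k. finite (V k)"
    and small: "\<And>k A. A \<in> V k \<Longrightarrow> bounded A \<and> diameter A \<le> r k"
    and r: "r \<longlonglongrightarrow> 0" and "0 \<le> s"
    and summ: "summable (\<lambda>k. real (card (V k)) * r k powr s)"
    and cov: "E \<subseteq> (\<Inter>N. \<Union>k\<in>{N..}. \<Union>(V k))"
  shows "hausdorff_measure s E = 0"
proof -
  define f where "f k = real (card (V k)) * r k powr s" for k
  have f_nonneg: "0 \<le> f k" for k by (simp add: f_def)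
  have sum_le_f: "(\<Sum>A\<in>V k. ennreal (diameter A powr s)) \<le> ennreal (f k)" for k
    unfolding f_def using small \<open>0 \<le> s\<close> by (rule sum_diameter_powr_le)
  have content_small: "hausdorff_content \<delta> s E \<le> 0 + ennreal \<epsilon>" if "0 < \<delta>" "0 < \<epsilon>" for \<delta> \<epsilon>
  proof -
    obtain N1 where N1: "\<And>k. N1 \<le> k \<Longrightarrow> r k < \<delta>"
      using order_tendstoD(2)[OF r \<open>0 < \<delta>\<close>] unfolding eventually_sequentially by blast
    obtain N2 where N2: "\<And>n. N2 \<le> n \<Longrightarrow> norm (\<Sum>k. f (k + n)) < \<epsilon>"
      using suminf_exist_split[OF \<open>0 < \<epsilon>\<close> summ] unfolding f_def by blast
    define N where "N = max N1 N2"
    have "hausdorff_content \<delta> s E \<le> (\<Sum>k. \<Sum>A\<in>V (k + N). ennreal (diameter A powr s))"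
    proof (rule hausdorff_content_le_suminf_finite_covers)
      show "bounded A \<and> diameter A \<le> \<delta>" if "A \<in> V (k + N)" for k A
      proof -
        have "N1 \<le> k + N" by (simp add: N_def)
        then show ?thesis using small[OF that] N1 by fastforce
      qed
      show "E \<subseteq> (\<Union>k. \<Union>(V (k + N)))"
      proof
        fix x assume "x \<in> E"
        then obtain k A where "N \<le> k" "A \<in> V k" "x \<in> A" using cov by blast
        then have "A \<in> V (k - N + N)" by simp
        with \<open>x \<in> A\<close> show "x \<in> (\<Union>k. \<Union>(V (k + N)))" by blast
      qed
    qed (use fin \<open>0 < \<delta>\<close> in auto)
    also have "\<dots> \<le> (\<Sum>k. ennreal (f (k + N)))"
      by (rule suminf_le[OF sum_le_f]) simp_all
    also have "\<dots> = ennreal (\<Sum>k. f (k + N))"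
      using f_nonneg summable_ignore_initial_segment[OF summ] unfolding f_def by (rule suminf_ennreal2)
    also have "\<dots> \<le> ennreal \<epsilon>"
      using N2[of N] by (intro ennreal_leI) (simp add: N_def)
    finally show ?thesis by simp
  qed
  have "hausdorff_content \<delta> s E = 0" if "0 < \<delta>" for \<delta>
    using ennreal_le_epsilon[OF content_small[OF that]] by simp
  then show ?thesis unfolding hausdorff_measure_def by simp
qed

lemma hausdorff_dim_le:
  fixes E :: "'a::metric_space set"
  assumes "0 \<le> \<alpha>" and "\<And>s. \<alpha> < s \<Longrightarrow> hausdorff_measure s E = 0"
  shows "hausdorff_dim E \<le> ereal \<alpha>"
proof (rule ereal_le_epsilon2)
  fix \<epsilon> :: real assume "0 < \<epsilon>"
  then have "hausdorff_dim E \<le> ereal (\<alpha> + \<epsilon>)"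
    using assms unfolding hausdorff_dim_def by (intro Inf_lower) auto
  then show "hausdorff_dim E \<le> ereal \<alpha> + ereal \<epsilon>" by simp
qed

section \<open>Cutting slabs into cubes\<close>

lemma bounded_diameter_le_if_coordinates_close:
  fixes S :: "(real^'n) set" and h :: real
  assumes "0 \<le> h" and close: "\<And>x y i. x \<in> S \<Longrightarrow> y \<in> S \<Longrightarrow> \<bar>x$i - y$i\<bar> \<le> h"
  shows "bounded S" "diameter S \<le> CARD('n) * h"
proof -
  have dist_le: "norm (x - y) \<le> CARD('n) * h" if "x \<in> S" "y \<in> S" for x y
  proof -
    have "norm (x - y) \<le> (\<Sum>i\<in>UNIV. \<bar>(x - y)$i\<bar>)" by (rule norm_le_l1_cart)
    also have "\<dots> \<le> (\<Sum>i\<in>(UNIV::'n set). h)" using close that by (intro sum_mono) simp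
    finally show ?thesis by simp
  qed
  then show "diameter S \<le> CARD('n) * h"
    using \<open>0 \<le> h\<close> by (intro diameter_le) (auto simp: dist_norm)
  show "bounded S"
  proof (cases "S = {}")
    case False
    then obtain x0 where "x0 \<in> S" by blast
    then have "S \<subseteq> cball x0 (CARD('n) * h)" using dist_le by (auto simp: dist_norm)
    then show ?thesis using bounded_cball bounded_subset by blast
  qed simp
qed

lemma powr_minus_half: "x powr (-1/2) = x powr (1/2) * x powr -1"
  for x :: real
proof -
  have "x powr (-1/2) = x powr (1/2 + -1)" by simp
  then show ?thesis by (simp only: powr_add)
qed

lemma Rk_pos: "0 < Rk k"
  by (simp add: Rk_def)

lemma Rk_powr: "Rk k powr x = (2 powr x) ^ k"
  by (simp add: Rk_def powr_realpow[symmetric] powr_powr powr_power mult.commute)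

definition slab_piece :: "'n::finite \<Rightarrow> real \<Rightarrow> nat \<Rightarrow> real^'n \<Rightarrow> int \<Rightarrow> (real^'n) set" where
  "slab_piece j1 c k z m = slab j1 c k z \<inter>
     {x. of_int m * (c * Rk k powr -1) \<le> x$j1 - (z$j1 - c * Rk k powr (-1/2) / 2) \<and>
         x$j1 - (z$j1 - c * Rk k powr (-1/2) / 2) \<le> (of_int m + 1) * (c * Rk k powr -1)}"

lemma slab_piece_small:
  fixes j1 :: "'n::finite"
  assumes "0 \<le> c"
  shows "bounded (slab_piece j1 c k z m) \<and> diameter (slab_piece j1 c k z m) \<le> CARD('n) * (c * Rk k powr -1)"
proof -
  define h where "h = c * Rk k powr -1"
  define edge where "edge = z$j1 - c * Rk k powr (-1/2) / 2"
  have "\<bar>x$i - y$i\<bar> \<le> h"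
    if "x \<in> slab_piece j1 c k z m" "y \<in> slab_piece j1 c k z m" for x y :: "real^'n" and i
  proof (cases "i = j1")
    case True
    have "of_int m * h \<le> x$j1 - edge" "x$j1 - edge \<le> of_int m * h + h"
      "of_int m * h \<le> y$j1 - edge" "y$j1 - edge \<le> of_int m * h + h"
      using that unfolding slab_piece_def Int_iff mem_Collect_eq h_def edge_def distrib_right by simp_all
    then show ?thesis unfolding True by linarith
  next
    case False
    then have "\<bar>x$i - z$i\<bar> \<le> h / 2" "\<bar>y$i - z$i\<bar> \<le> h / 2"
      using that unfolding slab_piece_def slab_def h_def by auto
    then show ?thesis by linarith
  qed
  moreover have "0 \<le> h" using assms by (simp add: h_def Rk_def)
  ultimately show ?thesis
    using bounded_diameter_le_if_coordinates_close[of h "slab_piece j1 c k z m"] by (simp add: h_def)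
qed

lemma slab_subset_slab_pieces:
  assumes "0 < c"
  shows "slab j1 c k z \<subseteq> (\<Union>m\<in>{0..\<lfloor>Rk k powr (1/2)\<rfloor>}. slab_piece j1 c k z m)"
proof
  fix x assume x: "x \<in> slab j1 c k z"
  define h where "h = c * Rk k powr -1"
  define w where "w = c * Rk k powr (-1/2)"
  define u where "u = x$j1 - (z$j1 - w / 2)"
  define m where "m = \<lfloor>u / h\<rfloor>"
  have "0 < h" using assms by (simp add: h_def Rk_def)
  have "\<bar>x$j1 - z$j1\<bar> \<le> w / 2"
    using x by (simp add: slab_def w_def)
  then have "0 \<le> u" "u \<le> w"
    unfolding u_def abs_le_iff by linarith+
  moreover have "w = h * Rk k powr (1/2)" unfolding w_def h_def powr_minus_half by simp
  ultimately have u: "0 \<le> u" "u \<le> h * Rk k powr (1/2)" by simp_all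
  have "m \<in> {0..\<lfloor>Rk k powr (1/2)\<rfloor>}"
    using u \<open>0 < h\<close> unfolding m_def by (auto intro!: floor_mono simp: divide_le_eq mult.commute)
  moreover have "of_int m \<le> u / h" "u / h < of_int m + 1"
    unfolding m_def by linarith+
  then have "of_int m * h \<le> u" "u \<le> (of_int m + 1) * h"
    using \<open>0 < h\<close> by (simp_all add: field_simps)
  then have "x \<in> slab_piece j1 c k z m"
    using x unfolding slab_piece_def u_def w_def h_def by blast
  ultimately show "x \<in> (\<Union>m\<in>{0..\<lfloor>Rk k powr (1/2)\<rfloor>}. slab_piece j1 c k z m)" by blast
qed

section \<open>Slabs meeting the unit cube\<close>

lemma abs_center_le_if_slab_meets_unit_cube:
  fixes j1 :: "'n::finite"
  assumes "x \<in> slab j1 c k z" and "\<forall>i. 0 \<le> x$i \<and> x$i \<le> 1" and "0 \<le> c"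
  shows "\<bar>z$i\<bar> \<le> 1 + c"
proof -
  have "Rk k powr (-1/2) \<le> 1" "Rk k powr -1 \<le> 1"
    by (simp_all add: Rk_def ge_one_powr_ge_zero powr_minus_divide)
  then have "c * Rk k powr (-1/2) \<le> c" "c * Rk k powr -1 \<le> c"
    using \<open>0 \<le> c\<close> by (simp_all only: mult_left_le powr_ge_zero)
  moreover have "\<bar>x$i - z$i\<bar> \<le> c * Rk k powr (-1/2) / 2 \<or> \<bar>x$i - z$i\<bar> \<le> c * Rk k powr -1 / 2"
    using assms(1) unfolding slab_def by (cases "i = j1") auto
  moreover have "0 \<le> x$i" "x$i \<le> 1" using assms(2) by auto
  ultimately show ?thesis using \<open>0 \<le> c\<close> by linarith
qed

lemma abs_numerators_le_if_abs_slab_center_le: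
  fixes j1 :: "'n::finite" and p :: "'n \<Rightarrow> int" and q :: int and a b B :: real and k :: nat
  defines "z \<equiv> slab_center j1 a b k p q" and "D \<equiv> Dk CARD('n) a b k"
  assumes "\<And>i. \<bar>z$i\<bar> \<le> B" and "0 < q"
  shows "\<bar>p j1\<bar> \<le> B * q * D^2 / (2 * Rk k)" and "i \<noteq> j1 \<Longrightarrow> \<bar>p i\<bar> \<le> B * D * q"
proof -
  have "0 < D" by (simp add: D_def Dk_def Rk_def)
  have "p j1 = z$j1 * (q * D^2) / (2 * Rk k)"
    using \<open>0 < D\<close> \<open>0 < q\<close> Rk_pos[of k] by (simp add: z_def D_def slab_center_def)
  then show "\<bar>p j1\<bar> \<le> B * q * D^2 / (2 * Rk k)"
    using assms(3)[of j1] \<open>0 < q\<close> Rk_pos[of k]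
    by (simp add: abs_mult divide_right_mono mult_right_mono mult.assoc)
  show "\<bar>p i\<bar> \<le> B * D * q" if "i \<noteq> j1"
  proof -
    have "p i = z$i * (D * q)"
      using \<open>0 < D\<close> \<open>0 < q\<close> that by (simp add: z_def D_def slab_center_def)
    then show ?thesis
      using assms(3)[of i] \<open>0 < q\<close> \<open>0 < D\<close> by (simp add: abs_mult mult_right_mono mult.assoc)
  qed
qed

definition slab_numerator_bound :: "'n::finite \<Rightarrow> real \<Rightarrow> real \<Rightarrow> real \<Rightarrow> nat \<Rightarrow> 'n \<Rightarrow> real" where
  "slab_numerator_bound j1 a b c k i =
     (if i = j1 then (1 + c) * Qk CARD('n) a b k * (Dk CARD('n) a b k)\<^sup>2 / (2 * Rk k)
      else (1 + c) * Dk CARD('n) a b k * Qk CARD('n) a b k)"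

definition slab_numerators :: "'n::finite \<Rightarrow> real \<Rightarrow> real \<Rightarrow> real \<Rightarrow> nat \<Rightarrow> ('n \<Rightarrow> int) set" where
  "slab_numerators j1 a b c k = PiE UNIV (\<lambda>i. {-\<lfloor>slab_numerator_bound j1 a b c k i\<rfloor>..\<lfloor>slab_numerator_bound j1 a b c k i\<rfloor>})"

lemma Fk_unit_cube_subset_slabs:
  fixes j1 :: "'n::finite"
  assumes "0 \<le> c"
  shows "Fk j1 a b c k \<inter> {x. \<forall>i. 0 \<le> x$i \<and> x$i \<le> 1}
    \<subseteq> (\<Union>(q, p) \<in> {1..\<lfloor>Qk CARD('n) a b k\<rfloor>} \<times> slab_numerators j1 a b c k.
          slab j1 c k (slab_center j1 a b k p q))" (is "_ \<subseteq> ?slabs")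
proof
  fix x assume x: "x \<in> Fk j1 a b c k \<inter> {x. \<forall>i. 0 \<le> x$i \<and> x$i \<le> 1}"
  then obtain p q where pq: "1 \<le> q" "real_of_int q \<le> Qk CARD('n) a b k"
    and x_slab: "x \<in> slab j1 c k (slab_center j1 a b k p q)"
    unfolding Fk_def by blast
  have "\<bar>slab_center j1 a b k p q $ i\<bar> \<le> 1 + c" for i
    using abs_center_le_if_slab_meets_unit_cube[OF x_slab] x \<open>0 \<le> c\<close> by blast
  note numerators = abs_numerators_le_if_abs_slab_center_le[OF this]
  have "(1 + c) * q * (Dk CARD('n) a b k)\<^sup>2 / (2 * Rk k)
      \<le> (1 + c) * Qk CARD('n) a b k * (Dk CARD('n) a b k)\<^sup>2 / (2 * Rk k)"
    "(1 + c) * Dk CARD('n) a b k * q \<le> (1 + c) * Dk CARD('n) a b k * Qk CARD('n) a b k"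
    using pq \<open>0 \<le> c\<close>
    by (intro divide_right_mono mult_right_mono mult_left_mono; simp add: Dk_def Rk_def)+
  then have "\<bar>p i\<bar> \<le> slab_numerator_bound j1 a b c k i" for i
    using numerators(1) numerators(2)[of i] pq unfolding slab_numerator_bound_def by (cases "i = j1") auto
  then have "p \<in> slab_numerators j1 a b c k"
    by (auto simp: slab_numerators_def le_floor_iff abs_le_iff minus_le_iff)
  moreover have "q \<in> {1..\<lfloor>Qk CARD('n) a b k\<rfloor>}" using pq by (simp add: le_floor_iff)
  ultimately show "x \<in> ?slabs" using x_slab by blast
qed

definition slab_pieces :: "'n::finite \<Rightarrow> real \<Rightarrow> real \<Rightarrow> real \<Rightarrow> nat \<Rightarrow> (real^'n) set set" where
  "slab_pieces j1 a b c k = (\<lambda>(q, p, m). slab_piece j1 c k (slab_center j1 a b k p q) m) `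
     ({1..\<lfloor>Qk CARD('n) a b k\<rfloor>} \<times> slab_numerators j1 a b c k \<times> {0..\<lfloor>Rk k powr (1/2)\<rfloor>})"

lemma finite_slab_pieces: "finite (slab_pieces j1 a b c k)"
  by (simp add: slab_pieces_def slab_numerators_def finite_PiE)

lemma Fk_unit_cube_subset_slab_pieces:
  fixes j1 :: "'n::finite"
  assumes "0 < c"
  shows "Fk j1 a b c k \<inter> {x. \<forall>i. 0 \<le> x$i \<and> x$i \<le> 1} \<subseteq> \<Union>(slab_pieces j1 a b c k)"
proof
  fix x assume "x \<in> Fk j1 a b c k \<inter> {x. \<forall>i. 0 \<le> x$i \<and> x$i \<le> 1}"
  then obtain q p where
    qp: "(q, p) \<in> {1..\<lfloor>Qk CARD('n) a b k\<rfloor>} \<times> slab_numerators j1 a b c k"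
    and "x \<in> slab j1 c k (slab_center j1 a b k p q)"
    using Fk_unit_cube_subset_slabs[OF less_imp_le[OF \<open>0 < c\<close>]] by blast
  then obtain m where "m \<in> {0..\<lfloor>Rk k powr (1/2)\<rfloor>}" "x \<in> slab_piece j1 c k (slab_center j1 a b k p q) m"
    using slab_subset_slab_pieces[OF \<open>0 < c\<close>] by blast
  with qp show "x \<in> \<Union>(slab_pieces j1 a b c k)" unfolding slab_pieces_def by force
qed

section \<open>Counting the cubes\<close>

lemma card_lattice_box_le:
  fixes A :: "'n::finite \<Rightarrow> real"
  assumes "\<And>i. 0 \<le> A i"
  shows "real (card (PiE UNIV (\<lambda>i. {-\<lfloor>A i\<rfloor>..\<lfloor>A i\<rfloor>}))) \<le> (\<Prod>i\<in>UNIV. 2 * A i + 1)"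
proof -
  have "real (card {-\<lfloor>A i\<rfloor>..\<lfloor>A i\<rfloor>}) \<le> 2 * A i + 1" for i
    using assms[of i] by simp
  then show ?thesis by (simp add: card_PiE prod_mono)
qed

lemma one_le_Dk:
  assumes "1 \<le> n" "a \<le> 1" "0 \<le> b"
  shows "1 \<le> Dk n a b k"
proof -
  have "(real n - 1) * a \<le> real n - 1" using assms by (simp add: mult_left_le)
  then show ?thesis
    unfolding Dk_def Rk_def using assms by (intro ge_one_powr_ge_zero divide_nonneg_pos) auto
qed

lemma one_le_Qk:
  assumes "1 \<le> n" "1 + b \<le> 2 * a"
  shows "1 \<le> Qk n a b k"
  unfolding Qk_def Rk_def using assms by (intro ge_one_powr_ge_zero) auto

(* d and e are the exponents of D_k and Q_k as powers of R_k, with x = n. *)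
lemma divergence_exponent_identities:
  fixes x a b :: real
  defines "d \<equiv> (x - (x - 1) * a + x * b) / (x + 1)" and "e \<equiv> (x - 1) / (x + 1) * (2 * a - b - 1)"
  assumes "x + 1 \<noteq> 0"
  shows "e + 2 * d = 1 + b" and "e + (x - 1) * (d + e) = (x - 1) * a"
proof -
  have "d * (x + 1) = x - (x - 1) * a + x * b" "e * (x + 1) = (x - 1) * (2 * a - b - 1)"
    using assms by (simp_all add: d_def e_def)
  then show "e + 2 * d = 1 + b" "e + (x - 1) * (d + e) = (x - 1) * a"
    using assms by algebra+
qed

lemma Qk_mult_Dk_square: "Qk n a b k * (Dk n a b k)\<^sup>2 = Rk k powr (1 + b)"
  using divergence_exponent_identities(1)[of "real n" a b]
  unfolding Qk_def Dk_def by (simp add: powr_power Rk_def flip: powr_add)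

lemma Qk_mult_Dk_Qk_power:
  assumes "1 \<le> n"
  shows "Qk n a b k * (Dk n a b k * Qk n a b k) ^ (n - 1) = Rk k powr ((real n - 1) * a)"
  using divergence_exponent_identities(2)[of "real n" a b] assms
  unfolding Qk_def Dk_def by (simp add: powr_power Rk_def of_nat_diff mult.commute flip: powr_add)

lemma numerator_bound_Qk_Dk_square:
  assumes "0 \<le> b" "0 \<le> c"
  shows "2 * ((1 + c) * Qk n a b k * (Dk n a b k)\<^sup>2 / (2 * Rk k)) + 1 \<le> 2 * (1 + c) * Rk k powr b"
proof -
  have "2 * ((1 + c) * Qk n a b k * (Dk n a b k)\<^sup>2 / (2 * Rk k)) = (1 + c) * Rk k powr b"
    using Qk_mult_Dk_square[of n a b k] Rk_pos[of k] by (simp add: powr_add mult.assoc)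
  moreover have "1 * 1 \<le> (1 + c) * Rk k powr b"
    using assms by (intro mult_mono) (auto simp: Rk_def ge_one_powr_ge_zero)
  ultimately show ?thesis by linarith
qed

lemma divergence_cover_count_le:
  fixes n k :: nat and a b c :: real
  defines "R \<equiv> Rk k" and "D \<equiv> Dk n a b k" and "Q \<equiv> Qk n a b k"
  assumes "1 \<le> n" "a \<le> 1" "0 \<le> b" "1 + b \<le> 2 * a" "0 \<le> c"
  shows "Q * ((2 * ((1 + c) * Q * D\<^sup>2 / (2 * R)) + 1) * (2 * ((1 + c) * D * Q) + 1) ^ (n - 1))
           * (R powr (1/2) + 1)
         \<le> 4 * (1 + c) * (3 * (1 + c)) ^ (n - 1) * R powr (1/2 + (real n - 1) * a + b)"
proof -
  have "1 \<le> D" "1 \<le> Q"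
    using one_le_Dk[of n a b k] one_le_Qk[of n b a k] assms by (simp_all add: D_def Q_def)
  define X where "X = 2 * (1 + c) * R powr b"
  define Y where "Y = 3 * (1 + c) * (D * Q)"
  have first: "2 * ((1 + c) * Q * D\<^sup>2 / (2 * R)) + 1 \<le> X"
    unfolding X_def R_def D_def Q_def using assms by (intro numerator_bound_Qk_Dk_square)
  have "1 * (1 * 1) \<le> (1 + c) * (D * Q)"
    using \<open>1 \<le> D\<close> \<open>1 \<le> Q\<close> \<open>0 \<le> c\<close> by (intro mult_mono) auto
  then have second: "2 * ((1 + c) * D * Q) + 1 \<le> Y"
    unfolding Y_def by (simp add: algebra_simps)
  have third: "R powr (1/2) + 1 \<le> 2 * R powr (1/2)"
    by (simp add: R_def Rk_def ge_one_powr_ge_zero)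
  have "0 \<le> 2 * ((1 + c) * D * Q) + 1" "0 \<le> X"
    using \<open>1 \<le> D\<close> \<open>1 \<le> Q\<close> \<open>0 \<le> c\<close> by (simp_all add: X_def)
  then have "(2 * ((1 + c) * Q * D\<^sup>2 / (2 * R)) + 1) * (2 * ((1 + c) * D * Q) + 1) ^ (n - 1) \<le> X * Y ^ (n - 1)"
    by (intro mult_mono[OF first power_mono[OF second]]) simp_all
  then have "Q * ((2 * ((1 + c) * Q * D\<^sup>2 / (2 * R)) + 1) * (2 * ((1 + c) * D * Q) + 1) ^ (n - 1))
      \<le> Q * (X * Y ^ (n - 1))"
    using \<open>1 \<le> Q\<close> by simp
  then have bound: "Q * ((2 * ((1 + c) * Q * D\<^sup>2 / (2 * R)) + 1) * (2 * ((1 + c) * D * Q) + 1) ^ (n - 1))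
             * (R powr (1/2) + 1)
      \<le> Q * (X * Y ^ (n - 1)) * (2 * R powr (1/2))"
    by (rule mult_mono[OF _ third]) (use \<open>0 \<le> X\<close> \<open>1 \<le> Q\<close> \<open>1 \<le> D\<close> \<open>0 \<le> c\<close> in \<open>simp_all add: Y_def\<close>)
  have collect: "Q * (X * Y ^ (n - 1)) * (2 * R powr (1/2))
      = 4 * (1 + c) * (3 * (1 + c)) ^ (n - 1) * (R powr b * R powr (1/2) * (Q * (D * Q) ^ (n - 1)))"
    unfolding X_def Y_def power_mult_distrib by (simp add: mult_ac)
  have exponent: "R powr b * R powr (1/2) * (Q * (D * Q) ^ (n - 1)) = R powr (1/2 + (real n - 1) * a + b)"
    unfolding R_def D_def Q_def Qk_mult_Dk_Qk_power[OF \<open>1 \<le> n\<close>] powr_add by (simp only: mult_ac)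
  show ?thesis using bound unfolding collect exponent .
qed

lemma prod_slab_numerator_bound:
  fixes j1 :: "'n::finite"
  shows "(\<Prod>i\<in>UNIV. 2 * slab_numerator_bound j1 a b c k i + 1)
    = (2 * ((1 + c) * Qk CARD('n) a b k * (Dk CARD('n) a b k)\<^sup>2 / (2 * Rk k)) + 1)
      * (2 * ((1 + c) * Dk CARD('n) a b k * Qk CARD('n) a b k) + 1) ^ (CARD('n) - 1)"
proof -
  have "(\<Prod>i\<in>UNIV. 2 * slab_numerator_bound j1 a b c k i + 1)
      = (2 * slab_numerator_bound j1 a b c k j1 + 1) * (\<Prod>i\<in>UNIV - {j1}. 2 * slab_numerator_bound j1 a b c k i + 1)"
    by (rule prod.remove) auto
  also have "(\<Prod>i\<in>UNIV - {j1}. 2 * slab_numerator_bound j1 a b c k i + 1)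
      = (\<Prod>i\<in>UNIV - {j1}. 2 * ((1 + c) * Dk CARD('n) a b k * Qk CARD('n) a b k) + 1)"
    by (rule prod.cong) (auto simp: slab_numerator_bound_def)
  finally show ?thesis
    by (simp add: slab_numerator_bound_def card_Diff_singleton)
qed

lemma card_slab_pieces_le:
  fixes j1 :: "'n::finite"
  assumes "a \<le> 1" "0 \<le> b" "1 + b \<le> 2 * a" "0 \<le> c"
  shows "card (slab_pieces j1 a b c k)
    \<le> 4 * (1 + c) * (3 * (1 + c)) ^ (CARD('n) - 1) * Rk k powr (1/2 + (real CARD('n) - 1) * a + b)"
proof -
  define N where "N = slab_numerator_bound j1 a b c k"
  define P where "P = slab_numerators j1 a b c k"
  define M where "M = \<lfloor>Rk k powr (1/2)\<rfloor>"
  have "1 \<le> Qk CARD('n) a b k" "1 \<le> CARD('n)"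
    using one_le_Qk[of "CARD('n)" b a k] finite_UNIV_card_ge_0[where 'a='n] assms by simp_all
  have "0 \<le> N i" for i
    using \<open>0 \<le> c\<close> by (simp add: N_def slab_numerator_bound_def Dk_def Qk_def Rk_def)
  have "real (card (slab_pieces j1 a b c k)) \<le> real (card ({1..\<lfloor>Qk CARD('n) a b k\<rfloor>} \<times> P \<times> {0..M}))"
    unfolding slab_pieces_def P_def M_def
    by (intro of_nat_mono card_image_le) (simp add: slab_numerators_def finite_PiE)
  also have "\<dots> = real_of_int \<lfloor>Qk CARD('n) a b k\<rfloor> * real (card P) * (real_of_int M + 1)"
    using \<open>1 \<le> Qk CARD('n) a b k\<close> by (simp add: M_def card_cartesian_product)
  also have "\<dots> \<le> Qk CARD('n) a b k * (\<Prod>i\<in>UNIV. 2 * N i + 1) * (Rk k powr (1/2) + 1)"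
  proof (rule mult_mono[OF mult_mono])
    show "real (card P) \<le> (\<Prod>i\<in>UNIV. 2 * N i + 1)"
      unfolding P_def slab_numerators_def N_def[symmetric] by (rule card_lattice_box_le) fact
    show "real_of_int M + 1 \<le> Rk k powr (1/2) + 1" by (simp add: M_def)
  qed (use \<open>1 \<le> Qk CARD('n) a b k\<close> \<open>\<And>i. 0 \<le> N i\<close> in \<open>simp_all add: M_def prod_nonneg\<close>)
  also have "\<dots> \<le> 4 * (1 + c) * (3 * (1 + c)) ^ (CARD('n) - 1) * Rk k powr (1/2 + (real CARD('n) - 1) * a + b)"
    using divergence_cover_count_le[OF \<open>1 \<le> CARD('n)\<close> assms] by (simp add: N_def prod_slab_numerator_bound)
  finally show ?thesis .
qed

section \<open>The set of divergence\<close>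

lemma summable_mult_Rk_powr_minus_one:
  fixes g :: "nat \<Rightarrow> real"
  assumes "\<And>k. 0 \<le> g k" "\<And>k. g k \<le> K * Rk k powr \<alpha>" and "\<alpha> < s"
  shows "summable (\<lambda>k. g k * (C * Rk k powr -1) powr s)"
proof (rule summable_comparison_test')
  show "summable (\<lambda>k. K * C powr s * (2 powr (\<alpha> - s)) ^ k)"
    using \<open>\<alpha> < s\<close> by (intro summable_mult summable_geometric) (simp add: powr_less_one)
  show "norm (g k * (C * Rk k powr -1) powr s) \<le> K * C powr s * (2 powr (\<alpha> - s)) ^ k" for k
  proof -
    have "(C * Rk k powr -1) powr s = C powr s * Rk k powr (-s)"
      unfolding powr_mult powr_powr by simp
    then have "norm (g k * (C * Rk k powr -1) powr s) = g k * (C powr s * Rk k powr (-s))"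
      using assms(1)[of k] by simp
    also have "\<dots> \<le> K * Rk k powr \<alpha> * (C powr s * Rk k powr (-s))"
      using assms(2)[of k] by (rule mult_right_mono) simp
    also have "\<dots> = K * C powr s * (Rk k powr \<alpha> * Rk k powr (-s))"
      by (simp only: mult_ac)
    also have "Rk k powr \<alpha> * Rk k powr (-s) = (2 powr (\<alpha> - s)) ^ k"
      using powr_add[of "Rk k" \<alpha> "-s", symmetric] by (simp add: Rk_powr)
    finally show ?thesis .
  qed
qed

lemma hausdorff_measure_divergence_set_eq_0:
  fixes j1 :: "'n::finite"
  assumes "a \<le> 1" "0 \<le> b" "1 + b \<le> 2 * a" "0 < c" "c0 \<le> 1"
    and s: "1/2 + (real CARD('n) - 1) * a + b < s"
  shows "hausdorff_measure s (divergence_set j1 a b c \<inter> {x. \<forall>i. 0 \<le> x$i \<and> x$i \<le> c0}) = 0"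
proof (rule hausdorff_measure_limsup_finite_covers_eq_0)
  define r where "r k = CARD('n) * c * Rk k powr -1" for k
  show "finite (slab_pieces j1 a b c k)" for k
    by (rule finite_slab_pieces)
  show "bounded A \<and> diameter A \<le> r k" if "A \<in> slab_pieces j1 a b c k" for k A
    using that slab_piece_small[of c j1 k] \<open>0 < c\<close> by (auto simp: slab_pieces_def r_def mult.assoc)
  have "r = (\<lambda>k. CARD('n) * c * (1/2) ^ k)"
    by (simp add: r_def fun_eq_iff Rk_def power_one_over)
  then show "r \<longlonglongrightarrow> 0"
    by (simp add: tendsto_mult_right_zero LIMSEQ_power_zero)
  have "0 \<le> (real CARD('n) - 1) * a"
    using assms finite_UNIV_card_ge_0[where 'a='n] by (intro mult_nonneg_nonneg) auto
  then show "0 \<le> s" using s assms by linarith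
  show "summable (\<lambda>k. real (card (slab_pieces j1 a b c k)) * r k powr s)"
    unfolding r_def using card_slab_pieces_le[OF assms(1-3) less_imp_le[OF \<open>0 < c\<close>], of j1] s
    by (intro summable_mult_Rk_powr_minus_one[where \<alpha>="1/2 + (real CARD('n) - 1) * a + b"]) auto
  show "divergence_set j1 a b c \<inter> {x. \<forall>i. 0 \<le> x$i \<and> x$i \<le> c0}
      \<subseteq> (\<Inter>N. \<Union>k\<in>{N..}. \<Union>(slab_pieces j1 a b c k))"
  proof (intro subsetI INT_I)
    fix x N assume x: "x \<in> divergence_set j1 a b c \<inter> {x. \<forall>i. 0 \<le> x$i \<and> x$i \<le> c0}"
    then have "0 \<le> x$i \<and> x$i \<le> 1" for i
      using \<open>c0 \<le> 1\<close> by (smt (verit) Int_iff mem_Collect_eq)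
    moreover obtain k where "N \<le> k" "x \<in> Fk j1 a b c k"
      using x unfolding divergence_set_def by blast
    ultimately show "x \<in> (\<Union>k\<in>{N..}. \<Union>(slab_pieces j1 a b c k))"
      using Fk_unit_cube_subset_slab_pieces[OF \<open>0 < c\<close>, of j1 a b k] by blast
  qed
qed

theorem theorem5p1:
  fixes j1 :: "'n::finite" and a b c c0 :: real
  assumes "CARD('n) \<ge> 2"
    and "0 < a" "a \<le> 1" "0 < b" "b \<le> 1/2" "2 * a \<ge> 1 + b"
    and "0 < c"
    and "0 < c0" "c0 \<le> 1"
  shows "hausdorff_dim (divergence_set j1 a b c \<inter> {x :: real^'n. \<forall>i. 0 \<le> x $ i \<and> x $ i \<le> c0})
           \<le> ereal (1/2 + (real CARD('n) - 1) * a + b)"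
proof (rule hausdorff_dim_le)
  show "0 \<le> 1/2 + (real CARD('n) - 1) * a + b"
    using assms by (intro add_nonneg_nonneg mult_nonneg_nonneg) auto
  show "hausdorff_measure s (divergence_set j1 a b c \<inter> {x. \<forall>i. 0 \<le> x $ i \<and> x $ i \<le> c0}) = 0"
    if "1/2 + (real CARD('n) - 1) * a + b < s" for s
    using hausdorff_measure_divergence_set_eq_0[of a b c c0 s j1] assms that by simp
qed

end
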